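(* Let $(V,E,\mu)$ be an infinite, connected, locally finite weighted graph, $o\in V$, and $p>0$. If $$\sum_{n=1}^\infty n\Big(\sum_{k=n}^\infty\frac{k}{\mu(B_k)}\Big)^p=\infty,$$ then $$\sum_{n=1}^\infty n\Big(\sum_{k=n}^\infty\frac1{b_k}\Big)^p=\infty.$$
   Context: Weighted graph: $\mu_{xy}=\mu_{yx}\ge0$, $\mu_{xy}>0$ iff $x\sim y$, $\mu(x)=\sum_{y\sim x}\mu_{xy}$, $\mu(A)=\sum_{x\in A}\mu(x)$. $d$ is graph distance, $B_k=\{x:d(o,x)\le k\}$, and $b_k=\sum_{x\in B_k,\,y\notin B_k,\,x\sim y}\mu_{xy}>0$. *)

theory Defs
  imports Complex_Main
begin

definition weighted_graph :: "('a \<Rightarrow> 'a \<Rightarrow> real) \<Rightarrow> bool" where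
  "weighted_graph mu \<longleftrightarrow> (\<forall>x y. mu x y = mu y x \<and> 0 \<le> mu x y)"

definition adj :: "('a \<Rightarrow> 'a \<Rightarrow> real) \<Rightarrow> 'a \<Rightarrow> 'a \<Rightarrow> bool" where
  "adj mu x y \<longleftrightarrow> 0 < mu x y"

definition locally_finite_graph :: "('a \<Rightarrow> 'a \<Rightarrow> real) \<Rightarrow> bool" where
  "locally_finite_graph mu \<longleftrightarrow> (\<forall>x. finite {y. adj mu x y})"

definition connected_graph :: "('a \<Rightarrow> 'a \<Rightarrow> real) \<Rightarrow> bool" where
  "connected_graph mu \<longleftrightarrow> (\<forall>x y. \<exists>n. (adj mu ^^ n) x y)"

definition vmeasure :: "('a \<Rightarrow> 'a \<Rightarrow> real) \<Rightarrow> 'a \<Rightarrow> real" where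
  "vmeasure mu x = (\<Sum>y\<in>{y. adj mu x y}. mu x y)"

definition smeasure :: "('a \<Rightarrow> 'a \<Rightarrow> real) \<Rightarrow> 'a set \<Rightarrow> real" where
  "smeasure mu A = (\<Sum>x\<in>A. vmeasure mu x)"

definition gdist :: "('a \<Rightarrow> 'a \<Rightarrow> real) \<Rightarrow> 'a \<Rightarrow> 'a \<Rightarrow> nat" where
  "gdist mu x y = (LEAST n. (adj mu ^^ n) x y)"

definition gball :: "('a \<Rightarrow> 'a \<Rightarrow> real) \<Rightarrow> 'a \<Rightarrow> nat \<Rightarrow> 'a set" where
  "gball mu v0 k = {x. gdist mu v0 x \<le> k}"

definition bdry :: "('a \<Rightarrow> 'a \<Rightarrow> real) \<Rightarrow> 'a \<Rightarrow> nat \<Rightarrow> real" where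
  "bdry mu v0 k = (\<Sum>(x,y)\<in>{(x,y). x \<in> gball mu v0 k \<and> y \<notin> gball mu v0 k \<and> adj mu x y}. mu x y)"

end

theory Submission
  imports Defs "HOL-Analysis.Convex"
begin

text \<open>The boundary edge sets of the balls B_j are pairwise disjoint, and for j \<le> k they all
  consist of edges at vertices of B_k; hence the sum of b_j over k/2 < j \<le> k is at most
  \<mu>(B_k). Combined with the harmonic--arithmetic mean inequality this gives
  k/\<mu>(B_k) \<le> (4/k) \<Sum>{1/b_j | k/2 < j \<le> k}. Summing over k \<ge> n and exchanging the order of
  summation, each 1/b_j is counted for at most j values of k, each time with weight at most 4/j,
  so \<Sum>{k/\<mu>(B_k) | k \<ge> n} \<le> 4 \<Sum>{1/b_j | j > n/2}. The weighted p-th power series for \<mu> is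
  therefore dominated termwise by the one for b, evaluated at index n/2.\<close>

lemma card_sq_le_sum_mult_sum_inverse:
  fixes b :: "'b \<Rightarrow> real"
  assumes "finite J" and pos: "\<And>j. j \<in> J \<Longrightarrow> 0 < b j"
  shows "(real (card J))\<^sup>2 \<le> (\<Sum>j\<in>J. b j) * (\<Sum>j\<in>J. 1 / b j)"
proof -
  have "(\<Sum>j\<in>J. sqrt (b j) * (1 / sqrt (b j)))\<^sup>2
        \<le> (\<Sum>j\<in>J. (sqrt (b j))\<^sup>2) * (\<Sum>j\<in>J. (1 / sqrt (b j))\<^sup>2)"
    by (rule Cauchy_Schwarz_ineq_sum)
  moreover have "(\<Sum>j\<in>J. sqrt (b j) * (1 / sqrt (b j))) = (\<Sum>j\<in>J. 1)"
    using pos by (intro sum.cong) (auto dest!: pos)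
  moreover have "(\<Sum>j\<in>J. (sqrt (b j))\<^sup>2) = (\<Sum>j\<in>J. b j)"
    using pos by (intro sum.cong) (auto simp: less_imp_le)
  moreover have "(\<Sum>j\<in>J. (1 / sqrt (b j))\<^sup>2) = (\<Sum>j\<in>J. 1 / b j)"
    using pos by (intro sum.cong) (auto simp: less_imp_le power_divide)
  ultimately show ?thesis by simp
qed

lemma gdist_le_relpowp: "(adj mu ^^ n) v0 x \<Longrightarrow> gdist mu v0 x \<le> n"
  unfolding gdist_def by (rule Least_le)

lemma smeasure_nonneg: "0 \<le> smeasure mu A"
  unfolding smeasure_def vmeasure_def by (intro sum_nonneg) (auto simp: adj_def less_imp_le)

definition bdry_edges :: "('a \<Rightarrow> 'a \<Rightarrow> real) \<Rightarrow> 'a \<Rightarrow> nat \<Rightarrow> ('a \<times> 'a) set" where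
  "bdry_edges mu v0 k = {(x, y). x \<in> gball mu v0 k \<and> y \<notin> gball mu v0 k \<and> adj mu x y}"

lemma bdry_eq_sum_bdry_edges: "bdry mu v0 k = (\<Sum>(x, y)\<in>bdry_edges mu v0 k. mu x y)"
  unfolding bdry_def bdry_edges_def ..

lemma bdry_edges_subset:
  "j \<le> k \<Longrightarrow> bdry_edges mu v0 j \<subseteq> Sigma (gball mu v0 k) (\<lambda>x. {y. adj mu x y})"
  by (auto simp: bdry_edges_def gball_def)

lemma smeasure_eq_sum_edges:
  assumes "locally_finite_graph mu" and "finite A"
  shows "smeasure mu A = (\<Sum>(x, y)\<in>Sigma A (\<lambda>x. {y. adj mu x y}). mu x y)"
  unfolding smeasure_def vmeasure_def
  using assms by (subst sum.Sigma) (auto simp: locally_finite_graph_def)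

context
  fixes mu :: "'a \<Rightarrow> 'a \<Rightarrow> real" and v0 :: 'a
  assumes conn: "connected_graph mu"
begin

lemma relpowp_gdist: "(adj mu ^^ gdist mu v0 x) v0 x"
  using conn unfolding connected_graph_def gdist_def by (meson LeastI_ex)

lemma gdist_adj_le: "adj mu x y \<Longrightarrow> gdist mu v0 y \<le> gdist mu v0 x + 1"
  using relpowp_gdist[of x] relpowp_Suc_I gdist_le_relpowp by fastforce

lemma gdist_eq_0D: "gdist mu v0 x = 0 \<Longrightarrow> x = v0"
  using relpowp_gdist[of x] by simp

lemma gdist_Suc_obtains_adj:
  assumes "gdist mu v0 y = Suc m"
  obtains x where "gdist mu v0 x = m" and "adj mu x y"
proof -
  from relpowp_gdist[of y] assms have "(adj mu ^^ Suc m) v0 y" by simp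
  then obtain x where x: "(adj mu ^^ m) v0 x" "adj mu x y" by (rule relpowp_Suc_E)
  have "gdist mu v0 x \<le> m" using gdist_le_relpowp[OF x(1)] .
  moreover have "Suc m \<le> gdist mu v0 x + 1" using gdist_adj_le[OF x(2)] assms by simp
  ultimately show thesis using that x(2) by simp
qed

lemma bdry_edges_disjoint: "i \<noteq> j \<Longrightarrow> bdry_edges mu v0 i \<inter> bdry_edges mu v0 j = {}"
  using gdist_adj_le by (fastforce simp: bdry_edges_def gball_def)

lemma gball_Suc_subset:
  "gball mu v0 (Suc k) \<subseteq> gball mu v0 k \<union> (\<Union>x\<in>gball mu v0 k. {y. adj mu x y})"
proof
  fix y assume "y \<in> gball mu v0 (Suc k)"
  then have "gdist mu v0 y \<le> Suc k" by (simp add: gball_def)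
  then consider "gdist mu v0 y \<le> k" | "gdist mu v0 y = Suc k" by linarith
  then show "y \<in> gball mu v0 k \<union> (\<Union>x\<in>gball mu v0 k. {y. adj mu x y})"
  proof cases
    case 1
    then show ?thesis by (simp add: gball_def)
  next
    case 2
    then obtain x where "gdist mu v0 x = k" "adj mu x y" by (rule gdist_Suc_obtains_adj)
    then show ?thesis by (auto simp: gball_def)
  qed
qed

context
  assumes lf: "locally_finite_graph mu"
begin

lemma finite_gball: "finite (gball mu v0 k)"
proof (induction k)
  case 0
  have "gball mu v0 0 \<subseteq> {v0}" using gdist_eq_0D by (auto simp: gball_def)
  then show ?case by (rule finite_subset) simp
next
  case (Suc k)
  with lf show ?case
    by (intro finite_subset[OF gball_Suc_subset]) (auto simp: locally_finite_graph_def)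
qed

lemma finite_gball_edges: "finite (Sigma (gball mu v0 k) (\<lambda>x. {y. adj mu x y}))"
  using finite_gball lf by (auto simp: locally_finite_graph_def)

lemma finite_bdry_edges: "finite (bdry_edges mu v0 k)"
  by (rule finite_subset[OF bdry_edges_subset[OF order.refl] finite_gball_edges])

context
  assumes wg: "weighted_graph mu"
begin

lemma sum_bdry_le_smeasure_gball:
  assumes "J \<subseteq> {..k}"
  shows "(\<Sum>j\<in>J. bdry mu v0 j) \<le> smeasure mu (gball mu v0 k)"
proof -
  have "finite J" using assms finite_subset by blast
  then have "(\<Sum>j\<in>J. bdry mu v0 j) = (\<Sum>(x, y)\<in>(\<Union>j\<in>J. bdry_edges mu v0 j). mu x y)"
    unfolding bdry_eq_sum_bdry_edges
    using finite_bdry_edges bdry_edges_disjoint by (subst sum.UNION_disjoint) auto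
  also have "\<dots> \<le> (\<Sum>(x, y)\<in>Sigma (gball mu v0 k) (\<lambda>x. {y. adj mu x y}). mu x y)"
  proof (rule sum_mono2[OF finite_gball_edges])
    show "(\<Union>j\<in>J. bdry_edges mu v0 j) \<subseteq> Sigma (gball mu v0 k) (\<lambda>x. {y. adj mu x y})"
      using assms by (intro UN_least bdry_edges_subset) auto
  qed (use wg in \<open>auto simp: weighted_graph_def\<close>)
  finally show ?thesis
    by (simp add: smeasure_eq_sum_edges[OF lf finite_gball])
qed

lemma bdry_pos:
  assumes "infinite (UNIV :: 'a set)"
  shows "0 < bdry mu v0 j"
proof -
  have "\<exists>y. y \<notin> gball mu v0 j"
    using assms finite_gball[of j] by (metis UNIV_I finite_subset subsetI)
  then obtain y where y: "y \<notin> gball mu v0 j"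
    and y_min: "\<And>z. z \<notin> gball mu v0 j \<Longrightarrow> gdist mu v0 y \<le> gdist mu v0 z"
    using ex_has_least_nat[of "\<lambda>y. y \<notin> gball mu v0 j" _ "gdist mu v0"] by blast
  then obtain m where m: "gdist mu v0 y = Suc m"
    by (cases "gdist mu v0 y") (auto simp: gball_def)
  then obtain x where x: "gdist mu v0 x = m" "adj mu x y" by (rule gdist_Suc_obtains_adj)
  have "x \<in> gball mu v0 j"
    using y_min[of x] x m by fastforce
  with y x have xy: "(x, y) \<in> bdry_edges mu v0 j" by (simp add: bdry_edges_def)
  have "0 < mu x y" using x(2) by (simp add: adj_def)
  also have "\<dots> \<le> (\<Sum>(x, y)\<in>bdry_edges mu v0 j. mu x y)"
    using member_le_sum[OF xy, of "\<lambda>(x, y). mu x y"] finite_bdry_edges wg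
    by (auto simp: weighted_graph_def)
  finally show ?thesis by (simp add: bdry_eq_sum_bdry_edges)
qed

lemma ratio_gball_le_sum_inverse_bdry:
  assumes "infinite (UNIV :: 'a set)" and "1 \<le> k"
  shows "real k / smeasure mu (gball mu v0 k)
           \<le> 4 / real k * (\<Sum>j\<in>{k div 2 + 1..k}. 1 / bdry mu v0 j)"
proof -
  define J where "J = {k div 2 + 1..k}"
  define S where "S = (\<Sum>j\<in>J. bdry mu v0 j)"
  define C where "C = (\<Sum>j\<in>J. 1 / bdry mu v0 j)"
  have k_le_card: "real k \<le> 2 * real (card J)" by (simp add: J_def)
  have k_pos: "0 < real k" using assms(2) by simp
  have S_pos: "0 < S" unfolding S_def
    using bdry_pos[OF assms(1)] assms(2) by (intro sum_pos) (auto simp: J_def)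
  have hm_am: "(real (card J))\<^sup>2 \<le> S * C"
    unfolding S_def C_def
    by (rule card_sq_le_sum_mult_sum_inverse) (auto simp: J_def bdry_pos[OF assms(1)])
  have S_le: "S \<le> smeasure mu (gball mu v0 k)"
    unfolding S_def by (rule sum_bdry_le_smeasure_gball) (auto simp: J_def)
  have "real k / smeasure mu (gball mu v0 k) \<le> real k / S"
    using S_le S_pos k_pos by (intro divide_left_mono) auto
  also have "\<dots> \<le> 4 * C / real k"
  proof -
    have "real k * real k \<le> (2 * real (card J)) * (2 * real (card J))"
      using k_le_card k_pos by (intro mult_mono) auto
    also have "\<dots> \<le> 4 * (S * C)" using hm_am by (simp add: power2_eq_square)
    finally show ?thesis using S_pos k_pos by (simp add: field_simps)
  qed
  finally show ?thesis by (simp add: C_def J_def)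
qed

end

end

end

lemma sum_inverse_le_one:
  assumes "K \<subseteq> {j..<2 * j}"
  shows "(\<Sum>k\<in>K. 1 / real k) \<le> 1"
proof (cases "j = 0")
  case True
  with assms show ?thesis by simp
next
  case False
  have "(\<Sum>k\<in>K. 1 / real k) \<le> real (card K) * (1 / real j)"
  proof (rule sum_bounded_above)
    fix k assume "k \<in> K"
    with assms False show "1 / real k \<le> 1 / real j" by (auto intro!: frac_le)
  qed
  also have "card K \<le> j" using card_mono[OF _ assms] by simp
  then have "real (card K) * (1 / real j) \<le> 1" using False by (simp add: field_simps)
  finally show ?thesis .
qed

lemma sum_le_sum_dyadic_window:
  fixes a c :: "nat \<Rightarrow> real"
  assumes c_nonneg: "\<And>j. 0 \<le> c j"
    and window: "\<And>k. 1 \<le> k \<Longrightarrow> a k \<le> 4 / real k * (\<Sum>j\<in>{k div 2 + 1..k}. c j)"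
    and "1 \<le> n"
  shows "(\<Sum>k\<in>{n..<N}. a k) \<le> 4 * (\<Sum>j\<in>{n div 2 + 1..<N}. c j)"
proof -
  let ?A = "{n..<N}" and ?B = "{n div 2 + 1..<N}"
  have "(\<Sum>k\<in>?A. a k) \<le> (\<Sum>k\<in>?A. \<Sum>j\<in>{j\<in>?B. k div 2 < j \<and> j \<le> k}. 4 / real k * c j)"
  proof (rule sum_mono)
    fix k assume k: "k \<in> ?A"
    then have "{k div 2 + 1..k} = {j\<in>?B. k div 2 < j \<and> j \<le> k}" by auto
    with k assms(3) window[of k] show "a k \<le> (\<Sum>j\<in>{j\<in>?B. k div 2 < j \<and> j \<le> k}. 4 / real k * c j)"
      by (simp add: sum_distrib_left)
  qed
  also have "\<dots> = (\<Sum>j\<in>?B. \<Sum>k\<in>{k\<in>?A. k div 2 < j \<and> j \<le> k}. 4 / real k * c j)"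
    by (rule sum.swap_restrict) auto
  also have "\<dots> \<le> (\<Sum>j\<in>?B. 4 * c j)"
  proof (rule sum_mono)
    fix j
    have "{k\<in>?A. k div 2 < j \<and> j \<le> k} \<subseteq> {j..<2 * j}" by auto
    then have "(\<Sum>k\<in>{k\<in>?A. k div 2 < j \<and> j \<le> k}. 1 / real k) \<le> 1"
      by (rule sum_inverse_le_one)
    with c_nonneg[of j]
    have "4 * c j * (\<Sum>k\<in>{k\<in>?A. k div 2 < j \<and> j \<le> k}. 1 / real k) \<le> 4 * c j"
      by (simp add: mult_left_le)
    then show "(\<Sum>k\<in>{k\<in>?A. k div 2 < j \<and> j \<le> k}. 4 / real k * c j) \<le> 4 * c j"
      by (simp add: sum_distrib_left)
  qed
  finally show ?thesis by (simp add: sum_distrib_left)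
qed

lemma sum_atLeastLessThan_le_suminf:
  fixes f :: "nat \<Rightarrow> real"
  assumes "\<And>j. 0 \<le> f j" and "summable f"
  shows "(\<Sum>j\<in>{m..<N}. f j) \<le> (\<Sum>i. f (i + m))"
proof -
  have "(\<Sum>j\<in>{m..<N}. f j) = (\<Sum>i\<in>{0..<N - m}. f (i + m))"
    using sum.atLeastLessThan_shift_0[of f m N] by (simp add: comp_def add.commute)
  also have "\<dots> \<le> (\<Sum>i. f (i + m))"
    using assms by (intro sum_le_suminf summable_ignore_initial_segment) auto
  finally show ?thesis .
qed

lemma suminf_tail_le_dyadic_window:
  fixes a c :: "nat \<Rightarrow> real"
  assumes a_nonneg: "\<And>k. 0 \<le> a k" and c_nonneg: "\<And>j. 0 \<le> c j"
    and window: "\<And>k. 1 \<le> k \<Longrightarrow> a k \<le> 4 / real k * (\<Sum>j\<in>{k div 2 + 1..k}. c j)"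
    and "summable c" and "1 \<le> n"
  shows "summable (\<lambda>i. a (i + n))"
    and "(\<Sum>i. a (i + n)) \<le> 4 * (\<Sum>i. c (i + (n div 2 + 1)))"
proof -
  have partial: "(\<Sum>i<M. a (i + n)) \<le> 4 * (\<Sum>i. c (i + (n div 2 + 1)))" for M
  proof -
    have "(\<Sum>i<M. a (i + n)) = (\<Sum>k\<in>{n..<M + n}. a k)"
      using sum.atLeastLessThan_shift_0[of a n "M + n"]
      by (simp add: comp_def add.commute lessThan_atLeast0)
    also have "\<dots> \<le> 4 * (\<Sum>j\<in>{n div 2 + 1..<M + n}. c j)"
      using c_nonneg window assms(5) by (rule sum_le_sum_dyadic_window)
    also have "\<dots> \<le> 4 * (\<Sum>i. c (i + (n div 2 + 1)))"
      using sum_atLeastLessThan_le_suminf[OF c_nonneg assms(4), of "n div 2 + 1" "M + n"] by simp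
    finally show ?thesis .
  qed
  show summable: "summable (\<lambda>i. a (i + n))"
    using partial a_nonneg by (intro summableI_nonneg_bounded) auto
  show "(\<Sum>i. a (i + n)) \<le> 4 * (\<Sum>i. c (i + (n div 2 + 1)))"
    using summable partial by (rule suminf_le_const)
qed

lemma summable_comp_div2:
  fixes g :: "nat \<Rightarrow> real"
  assumes g_nonneg: "\<And>n. 0 \<le> g n" and "summable g"
  shows "summable (\<lambda>n. g (n div 2))"
proof (rule summableI_nonneg_bounded)
  fix M
  have "(\<Sum>n<M. g (n div 2)) \<le> (\<Sum>n<2 * M. g (n div 2))"
    using g_nonneg by (intro sum_mono2) auto
  also have "\<dots> = 2 * (\<Sum>m<M. g m)" by (induction M) auto
  also have "\<dots> \<le> 2 * suminf g"
    using sum_le_suminf[OF assms(2), of "{..<M}"] g_nonneg by auto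
  finally show "(\<Sum>n<M. g (n div 2)) \<le> 2 * suminf g" .
qed (use g_nonneg in auto)

lemma summable_weighted_tail_powr_if_dyadic_window:
  fixes a c :: "nat \<Rightarrow> real" and p :: real
  assumes a_nonneg: "\<And>k. 0 \<le> a k" and c_nonneg: "\<And>j. 0 \<le> c j"
    and window: "\<And>k. 1 \<le> k \<Longrightarrow> a k \<le> 4 / real k * (\<Sum>j\<in>{k div 2 + 1..k}. c j)"
    and c_summable: "summable (\<lambda>j. c (j + 1))"
    and c_tails: "summable (\<lambda>n. real (n + 1) * (\<Sum>i. c (i + n + 1)) powr p)"
    and "0 \<le> p"
  shows "summable (\<lambda>k. a (k + 1))"
    and "summable (\<lambda>n. real (n + 1) * (\<Sum>i. a (i + n + 1)) powr p)"
proof -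
  have "summable c" using c_summable summable_Suc_iff[of c] by simp
  note tail = suminf_tail_le_dyadic_window[OF a_nonneg c_nonneg window this]
  show "summable (\<lambda>k. a (k + 1))" using tail(1)[of 1] by simp
  define T where "T m = (\<Sum>i. c (i + m + 1))" for m
  define g where "g m = real (m + 1) * T m powr p" for m
  have T_nonneg: "0 \<le> T m" for m
    unfolding T_def using summable_ignore_initial_segment[OF \<open>summable c\<close>, of "m + 1"] c_nonneg
    by (intro suminf_nonneg) (auto simp: add.assoc)
  have "summable (\<lambda>n. g (n div 2))"
    using c_tails by (intro summable_comp_div2) (auto simp: g_def T_def)
  then have g_half: "summable (\<lambda>n. 2 * 4 powr p * g ((n + 1) div 2))"
    by (intro summable_mult) (simp add: summable_Suc_iff[of "\<lambda>n. g (n div 2)", symmetric])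
  have "real (n + 1) * (\<Sum>i. a (i + n + 1)) powr p \<le> 2 * 4 powr p * g ((n + 1) div 2)" for n
  proof -
    define m where "m = (n + 1) div 2"
    have S_nonneg: "0 \<le> (\<Sum>i. a (i + (n + 1)))"
      using tail(1)[of "n + 1"] a_nonneg by (intro suminf_nonneg) auto
    have "(\<Sum>i. a (i + (n + 1))) powr p \<le> (4 * T m) powr p"
      using tail(2)[of "n + 1"] S_nonneg \<open>0 \<le> p\<close>
      by (intro powr_mono2) (auto simp: T_def m_def add.assoc)
    also have "\<dots> = 4 powr p * T m powr p" using T_nonneg by (simp add: powr_mult)
    finally have "(\<Sum>i. a (i + (n + 1))) powr p \<le> 4 powr p * T m powr p" .
    moreover have "n + 1 \<le> 2 * (m + 1)" unfolding m_def by presburger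
    then have "real (n + 1) \<le> 2 * real (m + 1)" by linarith
    ultimately have "real (n + 1) * (\<Sum>i. a (i + (n + 1))) powr p
                       \<le> (2 * real (m + 1)) * (4 powr p * T m powr p)"
      by (intro mult_mono) auto
    also have "\<dots> = 2 * 4 powr p * g m" by (simp add: g_def)
    finally show ?thesis by (simp add: m_def add.assoc)
  qed
  then show "summable (\<lambda>n. real (n + 1) * (\<Sum>i. a (i + n + 1)) powr p)"
    by (intro summable_comparison_test'[OF g_half]) auto
qed

theorem lemma6p10:
  fixes mu :: "'a \<Rightarrow> 'a \<Rightarrow> real" and v0 :: 'a and p :: real
  assumes "weighted_graph mu"
    and "infinite (UNIV :: 'a set)"
    and "connected_graph mu"
    and "locally_finite_graph mu"
    and "0 < p"
    and "\<not> summable (\<lambda>k. real (k + 1) / smeasure mu (gball mu v0 (k + 1)))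
         \<or> \<not> summable (\<lambda>n. real (n + 1) *
              (\<Sum>i. real (i + n + 1) / smeasure mu (gball mu v0 (i + n + 1))) powr p)"
  shows "\<not> summable (\<lambda>k. 1 / bdry mu v0 (k + 1))
         \<or> \<not> summable (\<lambda>n. real (n + 1) *
              (\<Sum>i. 1 / bdry mu v0 (i + n + 1)) powr p)"
proof (rule ccontr)
  assume "\<not> ?thesis"
  then have b_summable: "summable (\<lambda>k. 1 / bdry mu v0 (k + 1))"
    and b_tails: "summable (\<lambda>n. real (n + 1) * (\<Sum>i. 1 / bdry mu v0 (i + n + 1)) powr p)"
    by auto
  have a_nonneg: "0 \<le> real k / smeasure mu (gball mu v0 k)" for k
    by (intro divide_nonneg_nonneg smeasure_nonneg) simp
  have c_nonneg: "0 \<le> 1 / bdry mu v0 j" for j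
    using bdry_pos[OF assms(3,4,1,2)] by (simp add: less_imp_le)
  note window = ratio_gball_le_sum_inverse_bdry[OF assms(3,4,1,2)]
  from summable_weighted_tail_powr_if_dyadic_window[OF a_nonneg c_nonneg window b_summable b_tails]
    assms(5,6)
  show False by simp
qed

end
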